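(* Let $(\mathbb{E}_{s,t}[\cdot])_{0\le s\le t<\infty}$ be an $\mathcal{F}_t$-consistent pricing mechanism (satisfying (A1)–(A4) below). Let $0\le t_0<t_1<\cdots<t_N$ and $K_t=\sum_{i=0}^{N-1}\xi_i1_{[t_i,t_{i+1})}(t)$ with $\xi_i\in L^2(\mathcal{F}_{t_i})$. For $0\le i\le N-1$, $t_i\le s\le t\le t_{i+1}$ and $X\in L^2(\mathcal{F}_t)$, define $\mathbb{E}^i_{s,t}[X;K]:=\mathbb{E}_{s,t}[X+K_t-K_s]$. Then for each $i=0,1,\dots,N-1$, the family $(\mathbb{E}^i_{s,t}[\cdot;K])_{t_i\le s\le t\le t_{i+1}}$ is an $\mathcal{F}_t$-consistent pricing mechanism on $[t_i,t_{i+1}]$.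
   Context: $(\Omega,\mathcal{F},P)$ carries a $d$-dimensional Brownian motion $B$, $\mathcal{F}_t=\sigma\{B_s:s\le t\}$; $L^2(\mathcal{F}_t)$: real square-integrable $\mathcal{F}_t$-measurable random variables. A family of operators $\mathbb{E}_{s,t}:L^2(\mathcal{F}_t)\to L^2(\mathcal{F}_s)$, $T_0\le s\le t\le T_1$, is an $\mathcal{F}_t$-consistent pricing mechanism on $[T_0,T_1]$ if for all $T_0\le s\le t\le T_1$ and $X,X'\in L^2(\mathcal{F}_t)$: (A1) $X\ge X'$ a.s. implies $\mathbb{E}_{s,t}[X]\ge\mathbb{E}_{s,t}[X']$ a.s.; (A2) $\mathbb{E}_{t,t}[X]=X$; (A3) $\mathbb{E}_{r,s}[\mathbb{E}_{s,t}[X]]=\mathbb{E}_{r,t}[X]$ for $T_0\le r\le s$; (A4) $1_A\mathbb{E}_{s,t}[X]=1_A\mathbb{E}_{s,t}[1_AX]$ a.s. for all $A\in\mathcal{F}_s$. *)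

theory Defs
  imports "HOL-Probability.Probability"
begin

text \<open>Natural filtration of a process B: F_t = sigma{B_r : 0 <= r <= t}, as a measure
  on the sample space of M (sigma-algebra only matters).\<close>
definition nat_filtration :: "'a measure \<Rightarrow> (real \<Rightarrow> 'a \<Rightarrow> 'b::topological_space) \<Rightarrow> real \<Rightarrow> 'a measure" where
  "nat_filtration M B t =
     sigma (space M) {B r -` A \<inter> space M | r A. 0 \<le> r \<and> r \<le> t \<and> A \<in> sets borel}"

definition brownian_motion :: "'a measure \<Rightarrow> (real \<Rightarrow> 'a \<Rightarrow> real ^ 'd) \<Rightarrow> bool" where
  "brownian_motion M B \<longleftrightarrow>
     prob_space M \<and>
     (\<forall>t\<ge>0. B t \<in> borel_measurable M) \<and>
     (AE \<omega> in M. B 0 \<omega> = 0) \<and>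
     (AE \<omega> in M. continuous_on {0..} (\<lambda>t. B t \<omega>)) \<and>
     (\<forall>s t. 0 \<le> s \<and> s < t \<longrightarrow>
        distributed M lborel (\<lambda>\<omega>. B t \<omega> - B s \<omega>)
          (\<lambda>x. ennreal (\<Prod>j\<in>UNIV. normal_density 0 (sqrt (t - s)) (x $ j))) \<and>
        (\<forall>A \<in> sets (nat_filtration M B s). \<forall>C \<in> sets (borel :: (real ^ 'd) measure).
           measure M (A \<inter> ((\<lambda>\<omega>. B t \<omega> - B s \<omega>) -` C \<inter> space M))
             = measure M A * measure M ((\<lambda>\<omega>. B t \<omega> - B s \<omega>) -` C \<inter> space M)))"

definition L2 :: "'a measure \<Rightarrow> 'a measure \<Rightarrow> ('a \<Rightarrow> real) set" where
  "L2 M G = {X. X \<in> borel_measurable G \<and> integrable M (\<lambda>\<omega>. (X \<omega>)\<^sup>2)}"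

text \<open>F-consistent pricing mechanism on the time set I (an interval):
  E s t maps L2(F t) to L2(F s) for s <= t in I, with axioms (A1)-(A4); equalities and
  inequalities hold almost surely.\<close>
definition consistent_pricing ::
  "'a measure \<Rightarrow> (real \<Rightarrow> 'a measure) \<Rightarrow> real set \<Rightarrow> (real \<Rightarrow> real \<Rightarrow> ('a \<Rightarrow> real) \<Rightarrow> 'a \<Rightarrow> real) \<Rightarrow> bool" where
  "consistent_pricing M F I E \<longleftrightarrow>
     (\<forall>s\<in>I. \<forall>t\<in>I. \<forall>X. s \<le> t \<and> X \<in> L2 M (F t) \<longrightarrow> E s t X \<in> L2 M (F s)) \<and>
     (\<forall>s\<in>I. \<forall>t\<in>I. \<forall>X X'. s \<le> t \<and> X \<in> L2 M (F t) \<and> X' \<in> L2 M (F t) \<and>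
        (AE \<omega> in M. X \<omega> \<ge> X' \<omega>) \<longrightarrow> (AE \<omega> in M. E s t X \<omega> \<ge> E s t X' \<omega>)) \<and>
     (\<forall>t\<in>I. \<forall>X. X \<in> L2 M (F t) \<longrightarrow> (AE \<omega> in M. E t t X \<omega> = X \<omega>)) \<and>
     (\<forall>r\<in>I. \<forall>s\<in>I. \<forall>t\<in>I. \<forall>X. r \<le> s \<and> s \<le> t \<and> X \<in> L2 M (F t) \<longrightarrow>
        (AE \<omega> in M. E r s (E s t X) \<omega> = E r t X \<omega>)) \<and>
     (\<forall>s\<in>I. \<forall>t\<in>I. \<forall>X A. s \<le> t \<and> X \<in> L2 M (F t) \<and> A \<in> sets (F s) \<longrightarrow>
        (AE \<omega> in M. indicator A \<omega> * E s t X \<omega>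
                    = indicator A \<omega> * E s t (\<lambda>\<omega>'. indicator A \<omega>' * X \<omega>') \<omega>))"

end

theory Submission
  imports Defs
begin

text \<open>On \<open>[t\<^sub>i, t\<^sub>i\<^sub>+\<^sub>1)\<close> the step process \<open>K\<close> is frozen at \<open>\<xi>\<^sub>i\<close>, so the correction
  \<open>K\<^sub>t - K\<^sub>s\<close> cancels in the composition \<open>\<bbbE>\<^sub>r\<^sub>,\<^sub>s[\<bbbE>\<^sub>s\<^sub>,\<^sub>t[X + K\<^sub>t - K\<^sub>s] + K\<^sub>s - K\<^sub>r]\<close> whenever
  \<open>s < t\<^sub>i\<^sub>+\<^sub>1\<close>, and time consistency (A3) is inherited from \<open>\<bbbE>\<close>. In the remaining case
  \<open>s = t = t\<^sub>i\<^sub>+\<^sub>1\<close> one uses (A2) together with the fact that, by monotonicity (A1),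
  \<open>\<bbbE>\<^sub>s\<^sub>,\<^sub>t\<close> respects almost sure equality. The other axioms transfer directly, because
  \<open>X \<mapsto> X + K\<^sub>t - K\<^sub>s\<close> maps \<open>L\<^sup>2(F\<^sub>t)\<close> into itself, preserves order, and
  \<open>1\<^sub>A (1\<^sub>A X + K\<^sub>t - K\<^sub>s) = 1\<^sub>A (X + K\<^sub>t - K\<^sub>s)\<close>.\<close>

lemma space_nat_filtration [simp]: "space (nat_filtration M B t) = space M"
  unfolding nat_filtration_def by (simp add: space_measure_of_conv)

lemma sets_nat_filtration:
  "sets (nat_filtration M B t) =
     sigma_sets (space M) {B r -` A \<inter> space M | r A. 0 \<le> r \<and> r \<le> t \<and> A \<in> sets borel}"
  unfolding nat_filtration_def by (rule sets_measure_of) auto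

lemma subalgebra_nat_filtration_mono:
  "s \<le> t \<Longrightarrow> subalgebra (nat_filtration M B t) (nat_filtration M B s)"
  unfolding subalgebra_def space_nat_filtration sets_nat_filtration
  by (rule conjI, simp, rule sigma_sets_mono') (auto intro: order_trans)

lemma subalgebra_nat_filtration:
  assumes "\<forall>t\<ge>0. B t \<in> borel_measurable M"
  shows "subalgebra M (nat_filtration M B t)"
  unfolding subalgebra_def space_nat_filtration sets_nat_filtration
  using assms measurable_sets by (subst sigma_sets_le_sets_iff) blast+

lemma L2_subalgebra: "subalgebra H G \<Longrightarrow> f \<in> L2 M G \<Longrightarrow> f \<in> L2 M H"
  using measurable_from_subalg unfolding L2_def by blast

lemma L2_imp_borel_measurable: "subalgebra M G \<Longrightarrow> f \<in> L2 M G \<Longrightarrow> f \<in> borel_measurable M"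
  using measurable_from_subalg unfolding L2_def by blast

lemma L2_zero: "(\<lambda>_. 0) \<in> L2 M G"
  unfolding L2_def by simp

lemma L2_uminus: "f \<in> L2 M G \<Longrightarrow> (\<lambda>\<omega>. - f \<omega>) \<in> L2 M G"
  unfolding L2_def by auto

lemma L2_add:
  assumes sub: "subalgebra M G" and f: "f \<in> L2 M G" and g: "g \<in> L2 M G"
  shows "(\<lambda>\<omega>. f \<omega> + g \<omega>) \<in> L2 M G"
proof -
  have [measurable]: "f \<in> borel_measurable M" "g \<in> borel_measurable M"
    using sub f g by (auto intro: L2_imp_borel_measurable)
  have "integrable M (\<lambda>\<omega>. (f \<omega> + g \<omega>)\<^sup>2)"
  proof (rule Bochner_Integration.integrable_bound)
    show "integrable M (\<lambda>\<omega>. 2 * (f \<omega>)\<^sup>2 + 2 * (g \<omega>)\<^sup>2)"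
      using f g unfolding L2_def by auto
    show "(\<lambda>\<omega>. (f \<omega> + g \<omega>)\<^sup>2) \<in> borel_measurable M"
      by measurable
    have "(f \<omega> + g \<omega>)\<^sup>2 \<le> 2 * (f \<omega>)\<^sup>2 + 2 * (g \<omega>)\<^sup>2" for \<omega>
      using zero_le_power2[of "f \<omega> - g \<omega>"] by (simp add: power2_eq_square algebra_simps)
    then show "AE \<omega> in M. norm ((f \<omega> + g \<omega>)\<^sup>2) \<le> norm (2 * (f \<omega>)\<^sup>2 + 2 * (g \<omega>)\<^sup>2)"
      by simp
  qed
  then show ?thesis
    using f g unfolding L2_def by auto
qed

lemma L2_sum:
  assumes "subalgebra M G" "finite I" "\<And>i. i \<in> I \<Longrightarrow> f i \<in> L2 M G"
  shows "(\<lambda>\<omega>. \<Sum>i\<in>I. f i \<omega>) \<in> L2 M G"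
  using assms(2,3) by induction (auto intro: L2_zero L2_add[OF assms(1)])

lemma L2_indicator_mult:
  assumes sub: "subalgebra M G" and f: "f \<in> L2 M G" and A: "A \<in> sets G"
  shows "(\<lambda>\<omega>. indicator A \<omega> * f \<omega>) \<in> L2 M G"
proof -
  have [measurable]: "f \<in> borel_measurable G" "A \<in> sets G" "f \<in> borel_measurable M" "A \<in> sets M"
    using sub f A by (auto intro: L2_imp_borel_measurable simp: L2_def subalgebra_def)
  have "integrable M (\<lambda>\<omega>. (indicator A \<omega> * f \<omega>)\<^sup>2)"
  proof (rule Bochner_Integration.integrable_bound)
    show "integrable M (\<lambda>\<omega>. (f \<omega>)\<^sup>2)"
      using f unfolding L2_def by auto
    show "(\<lambda>\<omega>. (indicator A \<omega> * f \<omega>)\<^sup>2) \<in> borel_measurable M"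
      by measurable
    show "AE \<omega> in M. norm ((indicator A \<omega> * f \<omega>)\<^sup>2) \<le> norm ((f \<omega>)\<^sup>2)"
      by (simp add: indicator_def)
  qed
  moreover have "(\<lambda>\<omega>. indicator A \<omega> * f \<omega>) \<in> borel_measurable G"
    by measurable
  ultimately show ?thesis
    unfolding L2_def by auto
qed

lemma consistent_pricing_L2:
  "\<lbrakk>consistent_pricing M F I E; s \<in> I; t \<in> I; s \<le> t; X \<in> L2 M (F t)\<rbrakk> \<Longrightarrow> E s t X \<in> L2 M (F s)"
  unfolding consistent_pricing_def by simp

lemma consistent_pricing_mono:
  "\<lbrakk>consistent_pricing M F I E; s \<in> I; t \<in> I; s \<le> t; X \<in> L2 M (F t); X' \<in> L2 M (F t);
    AE \<omega> in M. X' \<omega> \<le> X \<omega>\<rbrakk> \<Longrightarrow> AE \<omega> in M. E s t X' \<omega> \<le> E s t X \<omega>"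
  unfolding consistent_pricing_def by simp

lemma consistent_pricing_diag:
  "\<lbrakk>consistent_pricing M F I E; t \<in> I; X \<in> L2 M (F t)\<rbrakk> \<Longrightarrow> AE \<omega> in M. E t t X \<omega> = X \<omega>"
  unfolding consistent_pricing_def by simp

lemma consistent_pricing_comp:
  "\<lbrakk>consistent_pricing M F I E; r \<in> I; s \<in> I; t \<in> I; r \<le> s; s \<le> t; X \<in> L2 M (F t)\<rbrakk>
    \<Longrightarrow> AE \<omega> in M. E r s (E s t X) \<omega> = E r t X \<omega>"
  unfolding consistent_pricing_def by simp

lemma consistent_pricing_local:
  "\<lbrakk>consistent_pricing M F I E; s \<in> I; t \<in> I; s \<le> t; X \<in> L2 M (F t); A \<in> sets (F s)\<rbrakk>
    \<Longrightarrow> AE \<omega> in M. indicator A \<omega> * E s t X \<omega>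
                   = indicator A \<omega> * E s t (\<lambda>\<omega>'. indicator A \<omega>' * X \<omega>') \<omega>"
  unfolding consistent_pricing_def by simp

lemma consistent_pricing_subset:
  "consistent_pricing M F I E \<Longrightarrow> J \<subseteq> I \<Longrightarrow> consistent_pricing M F J E"
  unfolding consistent_pricing_def by (simp add: subset_iff)

lemma consistent_pricing_AE_cong:
  assumes "consistent_pricing M F I E" "s \<in> I" "t \<in> I" "s \<le> t"
    and "X \<in> L2 M (F t)" "X' \<in> L2 M (F t)" "AE \<omega> in M. X \<omega> = X' \<omega>"
  shows "AE \<omega> in M. E s t X \<omega> = E s t X' \<omega>"
proof -
  have "AE \<omega> in M. E s t X' \<omega> \<le> E s t X \<omega>"
    by (rule consistent_pricing_mono[OF assms(1-6)], rule eventually_mono[OF assms(7)]) simp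
  moreover have "AE \<omega> in M. E s t X \<omega> \<le> E s t X' \<omega>"
    by (rule consistent_pricing_mono[OF assms(1-4,6,5)], rule eventually_mono[OF assms(7)]) simp
  ultimately show ?thesis
    by eventually_elim simp
qed

context
  fixes M :: "'a measure" and F :: "real \<Rightarrow> 'a measure" and a b :: real
    and E :: "real \<Rightarrow> real \<Rightarrow> ('a \<Rightarrow> real) \<Rightarrow> 'a \<Rightarrow> real" and K :: "real \<Rightarrow> 'a \<Rightarrow> real"
  assumes E: "consistent_pricing M F {a..b} E"
    and sub: "\<And>t. subalgebra M (F t)"
    and mono: "\<And>s t. s \<le> t \<Longrightarrow> subalgebra (F t) (F s)"
    and adapted: "\<And>t. K t \<in> L2 M (F t)"
    and frozen: "\<And>s. s \<in> {a..<b} \<Longrightarrow> K s = K a"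
begin

lemma L2_shift: "s \<le> t \<Longrightarrow> X \<in> L2 M (F t) \<Longrightarrow> (\<lambda>\<omega>. X \<omega> + K t \<omega> - K s \<omega>) \<in> L2 M (F t)"
  using L2_add[OF sub L2_add[OF sub _ adapted] L2_uminus[OF L2_subalgebra[OF mono adapted]]]
  by simp

lemma shift_comp:
  assumes r: "r \<in> {a..b}" and s: "s \<in> {a..b}" and t: "t \<in> {a..b}"
    and "r \<le> s" "s \<le> t" and X: "X \<in> L2 M (F t)"
  shows "AE \<omega> in M. E r s (\<lambda>\<omega>. E s t (\<lambda>\<omega>. X \<omega> + K t \<omega> - K s \<omega>) \<omega> + K s \<omega> - K r \<omega>) \<omega>
                    = E r t (\<lambda>\<omega>. X \<omega> + K t \<omega> - K r \<omega>) \<omega>"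
proof (cases "s < b")
  case True
  then have "r \<in> {a..<b}" "s \<in> {a..<b}"
    using r s \<open>r \<le> s\<close> by auto
  then have "K r = K s"
    using frozen by metis
  then show ?thesis
    using consistent_pricing_comp[OF E r s t \<open>r \<le> s\<close> \<open>s \<le> t\<close> L2_shift[OF \<open>s \<le> t\<close> X]]
    by simp
next
  case False
  then have "s = b" "t = b"
    using s t \<open>s \<le> t\<close> by auto
  then have b: "b \<in> {a..b}" "r \<le> b" and Xb: "X \<in> L2 M (F b)"
    using t \<open>r \<le> s\<close> X by auto
  have "AE \<omega> in M. E b b X \<omega> + K b \<omega> - K r \<omega> = X \<omega> + K b \<omega> - K r \<omega>"
    using consistent_pricing_diag[OF E b(1) Xb] by eventually_elim simp
  then have "AE \<omega> in M. E r b (\<lambda>\<omega>. E b b X \<omega> + K b \<omega> - K r \<omega>) \<omega>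
                     = E r b (\<lambda>\<omega>. X \<omega> + K b \<omega> - K r \<omega>) \<omega>"
    by (rule consistent_pricing_AE_cong[OF E r b
          L2_shift[OF b(2) consistent_pricing_L2[OF E b(1) b(1) order_refl Xb]]
          L2_shift[OF b(2) Xb]])
  then show ?thesis
    using \<open>s = b\<close> \<open>t = b\<close> by simp
qed

lemma shift_local:
  assumes s: "s \<in> {a..b}" and t: "t \<in> {a..b}" and "s \<le> t"
    and X: "X \<in> L2 M (F t)" and A: "A \<in> sets (F s)"
  shows "AE \<omega> in M. indicator A \<omega> * E s t (\<lambda>\<omega>. X \<omega> + K t \<omega> - K s \<omega>) \<omega>
                   = indicator A \<omega> * E s t (\<lambda>\<omega>. indicator A \<omega> * X \<omega> + K t \<omega> - K s \<omega>) \<omega>"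
proof -
  have "A \<in> sets (F t)"
    using A mono[OF \<open>s \<le> t\<close>] by (auto simp: subalgebra_def)
  then have AX: "(\<lambda>\<omega>. indicator A \<omega> * X \<omega>) \<in> L2 M (F t)"
    by (rule L2_indicator_mult[OF sub X])
  have eq: "(\<lambda>\<omega>'. indicator A \<omega>' * (indicator A \<omega>' * X \<omega>' + K t \<omega>' - K s \<omega>'))
      = (\<lambda>\<omega>'. indicator A \<omega>' * (X \<omega>' + K t \<omega>' - K s \<omega>'))"
    by (auto simp: indicator_def)
  show ?thesis
    using consistent_pricing_local[OF E s t \<open>s \<le> t\<close> L2_shift[OF \<open>s \<le> t\<close> X] A]
      consistent_pricing_local[OF E s t \<open>s \<le> t\<close> L2_shift[OF \<open>s \<le> t\<close> AX] A]
    unfolding eq by eventually_elim (simp only:)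
qed

lemma consistent_pricing_shift:
  "consistent_pricing M F {a..b} (\<lambda>s t X. E s t (\<lambda>\<omega>. X \<omega> + K t \<omega> - K s \<omega>))"
  unfolding consistent_pricing_def
proof (intro conjI ballI allI impI; (elim conjE)?)
  fix s t X assume st: "s \<in> {a..b}" "t \<in> {a..b}" "s \<le> t" and X: "X \<in> L2 M (F t)"
  show "E s t (\<lambda>\<omega>. X \<omega> + K t \<omega> - K s \<omega>) \<in> L2 M (F s)"
    by (rule consistent_pricing_L2[OF E st L2_shift[OF st(3) X]])
next
  fix s t X X' assume st: "s \<in> {a..b}" "t \<in> {a..b}" "s \<le> t"
    and X: "X \<in> L2 M (F t)" "X' \<in> L2 M (F t)" and "AE \<omega> in M. X' \<omega> \<le> X \<omega>"
  from \<open>AE \<omega> in M. X' \<omega> \<le> X \<omega>\<close>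
  have "AE \<omega> in M. X' \<omega> + K t \<omega> - K s \<omega> \<le> X \<omega> + K t \<omega> - K s \<omega>"
    by eventually_elim simp
  then show "AE \<omega> in M. E s t (\<lambda>\<omega>. X' \<omega> + K t \<omega> - K s \<omega>) \<omega>
                     \<le> E s t (\<lambda>\<omega>. X \<omega> + K t \<omega> - K s \<omega>) \<omega>"
    by (rule consistent_pricing_mono[OF E st L2_shift[OF st(3) X(1)] L2_shift[OF st(3) X(2)]])
next
  fix t X assume "t \<in> {a..b}" "X \<in> L2 M (F t)"
  then show "AE \<omega> in M. E t t (\<lambda>\<omega>. X \<omega> + K t \<omega> - K t \<omega>) \<omega> = X \<omega>"
    by (simp add: consistent_pricing_diag[OF E])
next
  fix r s t X assume "r \<in> {a..b}" "s \<in> {a..b}" "t \<in> {a..b}" "r \<le> s" "s \<le> t" "X \<in> L2 M (F t)"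
  then show "AE \<omega> in M. E r s (\<lambda>\<omega>. E s t (\<lambda>\<omega>. X \<omega> + K t \<omega> - K s \<omega>) \<omega> + K s \<omega> - K r \<omega>) \<omega>
                    = E r t (\<lambda>\<omega>. X \<omega> + K t \<omega> - K r \<omega>) \<omega>"
    by (rule shift_comp)
next
  fix s t X A assume "s \<in> {a..b}" "t \<in> {a..b}" "s \<le> t" "X \<in> L2 M (F t)" "A \<in> sets (F s)"
  then show "AE \<omega> in M. indicator A \<omega> * E s t (\<lambda>\<omega>. X \<omega> + K t \<omega> - K s \<omega>) \<omega>
                   = indicator A \<omega> * E s t (\<lambda>\<omega>. indicator A \<omega> * X \<omega> + K t \<omega> - K s \<omega>) \<omega>"
    by (rule shift_local)
qed

end

lemma step_process_eq:
  fixes tt :: "nat \<Rightarrow> real" and \<xi> :: "nat \<Rightarrow> 'a \<Rightarrow> real"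
  assumes incr: "\<forall>i<N. tt i < tt (Suc i)" and "i < N" and s: "s \<in> {tt i..<tt (Suc i)}"
  shows "(\<Sum>j<N. \<xi> j \<omega> * indicator {tt j..<tt (Suc j)} s) = \<xi> i \<omega>"
proof -
  have tt_mono: "tt m \<le> tt n" if "m \<le> n" "n \<le> N" for m n
    by (rule lift_Suc_mono_le_ivl[where N = "{..<N}"]) (use incr that in auto)
  have "s \<notin> {tt j..<tt (Suc j)}" if "j < N" "j \<noteq> i" for j
  proof (cases "j < i")
    case True
    then show ?thesis
      using tt_mono[of "Suc j" i] \<open>i < N\<close> s by auto
  next
    case False
    then show ?thesis
      using tt_mono[of "Suc i" j] \<open>j < N\<close> \<open>j \<noteq> i\<close> s by auto
  qed
  then have "\<xi> j \<omega> * indicator {tt j..<tt (Suc j)} s = (if j = i then \<xi> i \<omega> else 0)"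
    if "j \<in> {..<N}" for j
    using that s by (auto simp: indicator_def)
  then show ?thesis
    using \<open>i < N\<close> by (simp add: sum.cong[OF refl])
qed

lemma step_process_L2:
  assumes sub: "\<And>t. subalgebra M (F t)"
    and mono: "\<And>s t. s \<le> t \<Longrightarrow> subalgebra (F t) (F s)"
    and \<xi>: "\<forall>i<N. \<xi> i \<in> L2 M (F (tt i))"
  shows "(\<lambda>\<omega>. \<Sum>i<N. \<xi> i \<omega> * indicator {tt i..<tt (Suc i)} t) \<in> L2 M (F t)"
proof (rule L2_sum[OF sub finite_lessThan])
  fix i assume "i \<in> {..<N}"
  show "(\<lambda>\<omega>. \<xi> i \<omega> * indicator {tt i..<tt (Suc i)} t) \<in> L2 M (F t)"
  proof (cases "t \<in> {tt i..<tt (Suc i)}")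
    case True
    have "\<xi> i \<in> L2 M (F t)"
      using \<xi> \<open>i \<in> {..<N}\<close> True by (intro L2_subalgebra[OF mono[of "tt i" t]]) auto
    then show ?thesis
      using True by simp
  next
    case False
    then show ?thesis
      by (simp add: L2_zero)
  qed
qed

theorem lemma6p1:
  fixes M :: "'a measure" and B :: "real \<Rightarrow> 'a \<Rightarrow> real ^ 'd"
    and E :: "real \<Rightarrow> real \<Rightarrow> ('a \<Rightarrow> real) \<Rightarrow> 'a \<Rightarrow> real"
    and N :: nat and tt :: "nat \<Rightarrow> real" and \<xi> :: "nat \<Rightarrow> 'a \<Rightarrow> real"
    and K :: "real \<Rightarrow> 'a \<Rightarrow> real"
  assumes BM: "brownian_motion M B"
    and E_cons: "consistent_pricing M (nat_filtration M B) {0..} E"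
    and t0: "0 \<le> tt 0"
    and incr: "\<forall>i<N. tt i < tt (Suc i)"
    and xi: "\<forall>i<N. \<xi> i \<in> L2 M (nat_filtration M B (tt i))"
    and K_def: "\<And>t \<omega>. K t \<omega> = (\<Sum>i<N. \<xi> i \<omega> * indicator {tt i..<tt (Suc i)} t)"
  shows "\<forall>i<N. consistent_pricing M (nat_filtration M B) {tt i..tt (Suc i)}
                 (\<lambda>s t X. E s t (\<lambda>\<omega>. X \<omega> + K t \<omega> - K s \<omega>))"
proof (intro allI impI)
  fix i assume "i < N"
  have K_eq: "K = (\<lambda>t \<omega>. \<Sum>i<N. \<xi> i \<omega> * indicator {tt i..<tt (Suc i)} t)"
    using K_def by blast
  have sub: "subalgebra M (nat_filtration M B t)" for t
    using BM by (intro subalgebra_nat_filtration) (simp add: brownian_motion_def)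
  have "0 \<le> tt i"
    using t0 lift_Suc_mono_le_ivl[where f = tt and N = "{..<N}" and n = 0 and n' = i] incr \<open>i < N\<close>
    by fastforce
  then have E_i: "consistent_pricing M (nat_filtration M B) {tt i..tt (Suc i)} E"
    by (auto intro: consistent_pricing_subset[OF E_cons])
  have adapted: "K t \<in> L2 M (nat_filtration M B t)" for t
    using step_process_L2[where F = "nat_filtration M B", OF sub subalgebra_nat_filtration_mono xi]
    by (simp add: K_eq)
  have frozen: "K s = K (tt i)" if "s \<in> {tt i..<tt (Suc i)}" for s
  proof -
    have "tt i \<in> {tt i..<tt (Suc i)}"
      using incr \<open>i < N\<close> by simp
    then show ?thesis
      unfolding K_eq
      by (simp only: step_process_eq[OF incr \<open>i < N\<close> that] step_process_eq[OF incr \<open>i < N\<close>])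
  qed
  show "consistent_pricing M (nat_filtration M B) {tt i..tt (Suc i)}
                 (\<lambda>s t X. E s t (\<lambda>\<omega>. X \<omega> + K t \<omega> - K s \<omega>))"
    by (rule consistent_pricing_shift[OF E_i sub subalgebra_nat_filtration_mono adapted frozen])
qed

end
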